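(* Let $\mathfrak{C}$ be a class of groups closed under taking subgroups and finite direct products. If the groups $G$ and $H$ are locally $\mathfrak{C}$ up to powers, then $G\times H$ is locally $\mathfrak{C}$ up to powers.
   Context: A group $\Gamma$ is locally $\mathfrak{C}$ up to powers if for every finite list $\gamma_1,\dots,\gamma_k\in\Gamma$ there are exponents $t_1,\dots,t_k\in\mathbb{N}$ such that $\langle\gamma_1^{t_1},\dots,\gamma_k^{t_k}\rangle$ belongs to $\mathfrak{C}$. *)

theory Defs
  imports "HOL-Algebra.Algebra"
begin

definition locally_up_to_powers :: "('a monoid \<Rightarrow> bool) \<Rightarrow> 'a monoid \<Rightarrow> bool" where
  "locally_up_to_powers C G \<longleftrightarrow>
     (\<forall>(k::nat) (g::nat \<Rightarrow> 'a). (\<forall>i<k. g i \<in> carrier G) \<longrightarrow>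
        (\<exists>t::nat \<Rightarrow> nat. (\<forall>i<k. 0 < t i) \<and>
           C (subgroup_generated G ((\<lambda>i. g i [^]\<^bsub>G\<^esub> t i) ` {..<k}))))"

text \<open>Closure of (the part on one type of) a class of groups under taking subgroups.\<close>
definition subgroup_closed :: "('a monoid \<Rightarrow> bool) \<Rightarrow> bool" where
  "subgroup_closed C \<longleftrightarrow>
     (\<forall>(K::'a monoid) (U::'a set). group K \<and> C K \<and> subgroup U K \<longrightarrow> C (subgroup_generated K U))"

end

theory Submission
  imports Defs
begin

text \<open>Write g_i = (a_i, b_i) and choose exponents t_i for the a_i in G and s_i for the b_i
  in H, so that the generated subgroups A and B are in the class. With the common exponents
  t_i s_i every power g_i^(t_i s_i) lies in A \<times> B, which is in the class, and the subgroup these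
  powers generate is a subgroup of A \<times> B.\<close>

lemma nat_pow_DirProd:
  "(a, b) [^]\<^bsub>G \<times>\<times> H\<^esub> (n::nat) = (a [^]\<^bsub>G\<^esub> n, b [^]\<^bsub>H\<^esub> n)"
  by (induction n) (simp_all add: nat_pow_def)

lemma (in group) nat_pow_mult_mem_subgroup_generated:
  assumes "x \<in> carrier G" "x [^] (t::nat) \<in> S"
  shows "x [^] (t * s) \<in> carrier (subgroup_generated G S)"
proof -
  have "x [^] t \<in> carrier (subgroup_generated G S)"
    using assms subgroup_generated_subset_carrier_subset[of "{x [^] t}"]
    by (metis Int_iff carrier_subgroup_generated generate.incl nat_pow_closed)
  then have "(x [^] t) [^]\<^bsub>subgroup_generated G S\<^esub> s \<in> carrier (subgroup_generated G S)"
    by (meson group.is_monoid group_subgroup_generated monoid.nat_pow_closed)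
  then show ?thesis
    by (simp add: pow_subgroup_generated nat_pow_pow assms)
qed

lemma DirProd_nat_pow_mult_mem_subgroup_generated:
  assumes "group G" "group H" "x \<in> carrier (G \<times>\<times> H)"
    and "fst x [^]\<^bsub>G\<^esub> (t::nat) \<in> S" "snd x [^]\<^bsub>H\<^esub> (s::nat) \<in> T"
  shows "x [^]\<^bsub>G \<times>\<times> H\<^esub> (t * s)
           \<in> carrier (subgroup_generated G S) \<times> carrier (subgroup_generated H T)"
proof -
  obtain a b where x: "x = (a, b)" "a \<in> carrier G" "b \<in> carrier H"
    using assms(3) by auto
  have "a [^]\<^bsub>G\<^esub> (t * s) \<in> carrier (subgroup_generated G S)"
    using group.nat_pow_mult_mem_subgroup_generated[OF assms(1)] x assms(4) by simp
  moreover have "b [^]\<^bsub>H\<^esub> (s * t) \<in> carrier (subgroup_generated H T)"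
    using group.nat_pow_mult_mem_subgroup_generated[OF assms(2)] x assms(5) by simp
  ultimately show ?thesis
    using x by (simp add: nat_pow_DirProd mult.commute)
qed

lemma (in group) subgroup_generated_in_subgroup:
  assumes "subgroup K G" "Z \<subseteq> K"
  shows "subgroup_generated (G\<lparr>carrier := K\<rparr>) Z = subgroup_generated G Z"
proof -
  have "Z \<subseteq> carrier G"
    using assms subgroup.subset by blast
  then show ?thesis
    using generate_consistent[OF assms(2,1)] assms(2)
    by (simp add: subgroup_generated_def Int_absorb1)
qed

lemma subgroup_generated_DirProd_subgroup_generated:
  assumes "group G" "group H"
    and "Z \<subseteq> carrier (subgroup_generated G S) \<times> carrier (subgroup_generated H T)"
  shows "subgroup_generated (subgroup_generated G S \<times>\<times> subgroup_generated H T) Z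
           = subgroup_generated (G \<times>\<times> H) Z"
proof -
  have "subgroup_generated G S \<times>\<times> subgroup_generated H T
          = (G \<times>\<times> H)\<lparr>carrier := carrier (subgroup_generated G S) \<times> carrier (subgroup_generated H T)\<rparr>"
    by (simp add: DirProd_def subgroup_generated_def)
  moreover have "subgroup (carrier (subgroup_generated G S) \<times> carrier (subgroup_generated H T)) (G \<times>\<times> H)"
    using assms(1,2) by (intro DirProd_subgroups group.subgroup_subgroup_generated)
  ultimately show ?thesis
    using group.subgroup_generated_in_subgroup[OF DirProd_group[OF assms(1,2)]] assms(3) by simp
qed

lemma subgroup_closed_subgroup_generated:
  assumes "subgroup_closed C" "group K" "C K"
  shows "C (subgroup_generated K Z)"
proof -
  interpret group K by fact
  have "subgroup_generated K (carrier (subgroup_generated K Z)) = subgroup_generated K Z"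
    using subgroup.carrier_subgroup_generated_subgroup[OF subgroup_subgroup_generated]
    by (simp add: subgroup_generated_def)
  then show ?thesis
    using assms subgroup_subgroup_generated unfolding subgroup_closed_def by metis
qed

theorem lemma3p3:
  fixes C\<^sub>G :: "'a monoid \<Rightarrow> bool" and C\<^sub>H :: "'b monoid \<Rightarrow> bool"
    and C\<^sub>G\<^sub>H :: "('a \<times> 'b) monoid \<Rightarrow> bool"
    and G :: "'a monoid" and H :: "'b monoid"
  assumes "subgroup_closed C\<^sub>G" and "subgroup_closed C\<^sub>H" and "subgroup_closed C\<^sub>G\<^sub>H"
    and "\<And>A B. group A \<Longrightarrow> group B \<Longrightarrow> C\<^sub>G A \<Longrightarrow> C\<^sub>H B \<Longrightarrow> C\<^sub>G\<^sub>H (A \<times>\<times> B)"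
    and "group G" and "group H"
    and "locally_up_to_powers C\<^sub>G G" and "locally_up_to_powers C\<^sub>H H"
  shows "locally_up_to_powers C\<^sub>G\<^sub>H (G \<times>\<times> H)"
  unfolding locally_up_to_powers_def
proof (intro allI impI)
  fix k :: nat and g :: "nat \<Rightarrow> 'a \<times> 'b"
  assume g: "\<forall>i<k. g i \<in> carrier (G \<times>\<times> H)"
  obtain t :: "nat \<Rightarrow> nat" where t: "\<forall>i<k. 0 < t i"
    and A: "C\<^sub>G (subgroup_generated G ((\<lambda>i. fst (g i) [^]\<^bsub>G\<^esub> t i) ` {..<k}))"
    using assms(7)[unfolded locally_up_to_powers_def, rule_format, of k "\<lambda>i. fst (g i)"] g
    by (auto simp: mem_Times_iff)
  obtain s :: "nat \<Rightarrow> nat" where s: "\<forall>i<k. 0 < s i"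
    and B: "C\<^sub>H (subgroup_generated H ((\<lambda>i. snd (g i) [^]\<^bsub>H\<^esub> s i) ` {..<k}))"
    using assms(8)[unfolded locally_up_to_powers_def, rule_format, of k "\<lambda>i. snd (g i)"] g
    by (auto simp: mem_Times_iff)
  let ?A = "subgroup_generated G ((\<lambda>i. fst (g i) [^]\<^bsub>G\<^esub> t i) ` {..<k})"
  let ?B = "subgroup_generated H ((\<lambda>i. snd (g i) [^]\<^bsub>H\<^esub> s i) ` {..<k})"
  let ?Z = "(\<lambda>i. g i [^]\<^bsub>G \<times>\<times> H\<^esub> (t i * s i)) ` {..<k}"
  have Z: "?Z \<subseteq> carrier ?A \<times> carrier ?B"
  proof (rule image_subsetI)
    fix i assume "i \<in> {..<k}"
    then show "g i [^]\<^bsub>G \<times>\<times> H\<^esub> (t i * s i) \<in> carrier ?A \<times> carrier ?B"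
      using g by (intro DirProd_nat_pow_mult_mem_subgroup_generated[OF assms(5,6)]) auto
  qed
  have groups: "group ?A" "group ?B"
    using assms(5,6) by (simp_all add: group.group_subgroup_generated)
  have "C\<^sub>G\<^sub>H (?A \<times>\<times> ?B)"
    by (rule assms(4)[OF groups A B])
  then have "C\<^sub>G\<^sub>H (subgroup_generated (?A \<times>\<times> ?B) ?Z)"
    by (rule subgroup_closed_subgroup_generated[OF assms(3) DirProd_group[OF groups]])
  then have "C\<^sub>G\<^sub>H (subgroup_generated (G \<times>\<times> H) ?Z)"
    unfolding subgroup_generated_DirProd_subgroup_generated[OF assms(5,6) Z] .
  then show "\<exists>t :: nat \<Rightarrow> nat. (\<forall>i<k. 0 < t i) \<and>
      C\<^sub>G\<^sub>H (subgroup_generated (G \<times>\<times> H) ((\<lambda>i. g i [^]\<^bsub>G \<times>\<times> H\<^esub> t i) ` {..<k}))"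
    using t s by (intro exI[of _ "\<lambda>i. t i * s i"]) simp
qed

end
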